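(* Let $P$ be a monopolar $k$-chain in $V$ and $r\ge1$. Then $M(\mathrm{Vec}^0(P))\le|P|^{\natural_r}$. If moreover $\mathrm{supp}(P)\subset B_\varepsilon(p)$ for some $p\in V$ and $\varepsilon>0$, then $$|P|^{\natural_1}\le M(\mathrm{Vec}^0(P))+\varepsilon M(P).$$
   Context: $V$ is a finite-dimensional real inner product space. For a simple $k$-vector $\alpha=w_1\wedge\dots\wedge w_k$, $M(\alpha)=\sqrt{\det\langle w_i,w_j\rangle}$; for a general $\alpha\in\Lambda_k(V)$, $M(\alpha)=\inf\{\sum_iM(\alpha_i):\alpha=\sum_i\alpha_i,\ \alpha_i\text{ simple}\}$ (mass). A monopolar $k$-chain is a finite formal sum $P=\sum_i(p_i;\alpha_i)$, $p_i\in V$, $\alpha_i\in\Lambda_k(V)$, linear in the second slot at each point; written with distinct $p_i$, $\mathrm{supp}(P)=\{p_i:\alpha_i\ne0\}$, $M(P)=\sum_iM(\alpha_i)$, and $\mathrm{Vec}^0(P)=\sum_i\alpha_i\in\Lambda_k(V)$. $B_\varepsilon(p)$ is the open ball. $T_u(p;\alpha)=(p+u;\alpha)$, $\Delta_u=T_u-\mathrm{id}$, $\Delta^j_U=\Delta_{u_1}\circ\dots\circ\Delta_{u_j}$, $\|\Delta^j_U(p;\alpha)\|_j=|u_1|\cdots|u_j|M(\alpha)$. A $k$-form is a linear functional $\omega$ on monopolar $k$-chains; $\|\omega\|_0=\sup\{|\omega(p;\alpha)|:\alpha$ simple, $M(\alpha)=1\}$, $\|\omega\|_j=\sup\{|\omega(\Delta^j_U(p;\alpha))|:\|\Delta^j_U(p;\alpha)\|_j=1\}$,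 $|\omega|^{\natural_r}=\max_{0\le j\le r}\|\omega\|_j$, $\mathcal B_k^r$ = forms of finite norm; $|P|^{\natural_r}=\sup_{0\ne\omega\in\mathcal B_k^r}\omega(P)/|\omega|^{\natural_r}$. *)

theory Defs
  imports "HOL-Analysis.Analysis"
begin

text \<open>k-vectors over V (a euclidean space 'a) are modelled coordinate-free as
functions on k-tuples of vectors: the simple k-vector w_0 ^ ... ^ w_(k-1) is the
map v |-> det (w_i . v_j)_(i,j<k).\<close>

type_synonym 'a kvec = "(nat \<Rightarrow> 'a) \<Rightarrow> real"

definition wedge :: "nat \<Rightarrow> (nat \<Rightarrow> 'a::euclidean_space) \<Rightarrow> 'a kvec" where
  "wedge k w = (\<lambda>v. \<Sum>p | p permutes {..<k}. of_int (sign p) * (\<Prod>i<k. w i \<bullet> v (p i)))"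

definition gramdet :: "nat \<Rightarrow> (nat \<Rightarrow> 'a::euclidean_space) \<Rightarrow> real" where
  "gramdet k w = (\<Sum>p | p permutes {..<k}. of_int (sign p) * (\<Prod>i<k. w i \<bullet> w (p i)))"

definition Lambda :: "nat \<Rightarrow> ('a::euclidean_space) kvec set" where
  "Lambda k = {\<alpha>. \<exists>n (c::nat \<Rightarrow> real) ws. \<alpha> = (\<lambda>v. \<Sum>i<n. c i * wedge k (ws i) v)}"

definition simple :: "nat \<Rightarrow> ('a::euclidean_space) kvec \<Rightarrow> bool" where
  "simple k \<alpha> \<longleftrightarrow> (\<exists>c w. \<alpha> = (\<lambda>v. c * wedge k w v))"

definition mass :: "nat \<Rightarrow> ('a::euclidean_space) kvec \<Rightarrow> real" where
  "mass k \<alpha> = Inf {(\<Sum>i<n. \<bar>c i\<bar> * sqrt (gramdet k (ws i))) | n (c::nat \<Rightarrow> real) ws.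
                     \<alpha> = (\<lambda>v. \<Sum>i<n. c i * wedge k (ws i) v)}"

text \<open>Monopolar k-chains: finitely supported maps from points to k-vectors.\<close>
type_synonym 'a chain = "'a \<Rightarrow> 'a kvec"

definition supp :: "('a::euclidean_space) chain \<Rightarrow> 'a set" where
  "supp P = {p. P p \<noteq> (\<lambda>_. 0)}"

definition chains :: "nat \<Rightarrow> ('a::euclidean_space) chain set" where
  "chains k = {P. finite (supp P) \<and> (\<forall>p. P p \<in> Lambda k)}"

definition chain_mass :: "nat \<Rightarrow> ('a::euclidean_space) chain \<Rightarrow> real" where
  "chain_mass k P = (\<Sum>p\<in>supp P. mass k (P p))"

definition vec0 :: "('a::euclidean_space) chain \<Rightarrow> 'a kvec" where
  "vec0 P = (\<lambda>v. \<Sum>p\<in>supp P. P p v)"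

definition dirac :: "'a::euclidean_space \<Rightarrow> 'a kvec \<Rightarrow> 'a chain" where
  "dirac p \<alpha> = (\<lambda>q. if q = p then \<alpha> else (\<lambda>_. 0))"

definition transl :: "'a::euclidean_space \<Rightarrow> 'a chain \<Rightarrow> 'a chain" where
  "transl u P = (\<lambda>q. P (q - u))"

definition diffop :: "'a::euclidean_space \<Rightarrow> 'a chain \<Rightarrow> 'a chain" where
  "diffop u P = (\<lambda>q v. transl u P q v - P q v)"

fun diffops :: "'a::euclidean_space list \<Rightarrow> 'a chain \<Rightarrow> 'a chain" where
  "diffops [] P = P"
| "diffops (u # us) P = diffop u (diffops us P)"

definition is_form :: "nat \<Rightarrow> (('a::euclidean_space) chain \<Rightarrow> real) \<Rightarrow> bool" where
  "is_form k \<omega> \<longleftrightarrow>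
     (\<forall>P\<in>chains k. \<forall>Q\<in>chains k. \<omega> (\<lambda>p v. P p v + Q p v) = \<omega> P + \<omega> Q) \<and>
     (\<forall>c. \<forall>P\<in>chains k. \<omega> (\<lambda>p v. c * P p v) = c * \<omega> P)"

definition form_normj :: "nat \<Rightarrow> (('a::euclidean_space) chain \<Rightarrow> real) \<Rightarrow> nat \<Rightarrow> ereal" where
  "form_normj k \<omega> j =
    (if j = 0 then
       (SUP x \<in> {(p, \<alpha>). simple k \<alpha> \<and> mass k \<alpha> = 1}. ereal \<bar>\<omega> (dirac (fst x) (snd x))\<bar>)
     else
       (SUP x \<in> {(U, p, \<alpha>). length U = j \<and> \<alpha> \<in> Lambda k \<and>
                   (\<Prod>u\<leftarrow>U. norm u) * mass k \<alpha> = 1}.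
          ereal \<bar>\<omega> (diffops (fst x) (dirac (fst (snd x)) (snd (snd x))))\<bar>))"

definition form_natnorm :: "nat \<Rightarrow> nat \<Rightarrow> (('a::euclidean_space) chain \<Rightarrow> real) \<Rightarrow> ereal" where
  "form_natnorm k r \<omega> = (MAX j \<in> {..r}. form_normj k \<omega> j)"

definition Bforms :: "nat \<Rightarrow> nat \<Rightarrow> (('a::euclidean_space) chain \<Rightarrow> real) set" where
  "Bforms k r = {\<omega>. is_form k \<omega> \<and> form_natnorm k r \<omega> < \<infinity>}"

text \<open>Natural norm of a chain: sup over nonzero forms of finite norm; the supremum
of the empty family is taken to be 0.\<close>
definition chain_natnorm :: "nat \<Rightarrow> nat \<Rightarrow> ('a::euclidean_space) chain \<Rightarrow> ereal" where
  "chain_natnorm k r P =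
     sup 0 (SUP \<omega> \<in> {\<omega> \<in> Bforms k r. \<exists>Q\<in>chains k. \<omega> Q \<noteq> 0}.
              ereal (\<omega> P / real_of_ereal (form_natnorm k r \<omega>)))"

end

(* Lambda_k(V) is finite dimensional, spanned by the wedge products of basis
   vectors, and M is a norm on it; so Hahn-Banach gives a linear functional phi with
   phi(Vec0 P) = M(Vec0 P) and |phi| <= M.  The form Q |-> phi(Vec0 Q) has |.|_0 <= 1 and vanishes
   on all difference chains, Vec0 being translation invariant.  Its natural norm is therefore at
   most 1, and testing it on (0; Vec0 P) shows that it is exactly 1; its value on P is M(Vec0 P).

   P = (p; Vec0 P) + sum_q Delta_(q-p) (p; P q).  A form of natural norm N satisfies
   |w(p; alpha)| <= N M(alpha), by splitting alpha into simple k-vectors, and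
   |w(Delta_u (p; alpha))| <= N |u| M(alpha) by the definition of |.|_1; on the support of P,
   |q - p| < eps.

   Gram-Schmidt on the rows of w_1 ^ ... ^ w_k leaves the k-vector unchanged and turns its Gram
   determinant into a product of squared norms.  This gives det Gram >= 0 and the Hadamard-type
   bound |alpha(v)| <= k! |v_1| ... |v_k| M(alpha), so that M is definite. *)

theory Submission
  imports Defs "HOL-Library.Function_Algebras"
begin

section \<open>Wedge products and Gram determinants\<close>

lemma wedge_fun_upd:
  assumes "i < k"
  shows "wedge k (w(i := x)) v = (\<Sum>p | p permutes {..<k}. of_int (sign p) *
           ((x \<bullet> v (p i)) * (\<Prod>l\<in>{..<k} - {i}. w l \<bullet> v (p l))))"
  unfolding wedge_def
proof (rule sum.cong[OF refl])
  fix p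
  have "(\<Prod>l<k. (w(i := x)) l \<bullet> v (p l)) = (x \<bullet> v (p i)) * (\<Prod>l\<in>{..<k} - {i}. w l \<bullet> v (p l))"
    using assms by (subst prod.remove[of _ i]) (auto intro!: prod.cong)
  then show "of_int (sign p) * (\<Prod>l<k. (w(i := x)) l \<bullet> v (p l)) =
      of_int (sign p) * ((x \<bullet> v (p i)) * (\<Prod>l\<in>{..<k} - {i}. w l \<bullet> v (p l)))"
    by simp
qed

lemma wedge_fun_upd_add:
  "i < k \<Longrightarrow> wedge k (w(i := a + b)) v = wedge k (w(i := a)) v + wedge k (w(i := b)) v"
  by (simp add: wedge_fun_upd algebra_simps sum.distrib)

lemma wedge_fun_upd_scaleR:
  "i < k \<Longrightarrow> wedge k (w(i := c *\<^sub>R a)) v = c * wedge k (w(i := a)) v"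
  by (simp add: wedge_fun_upd sum_distrib_left algebra_simps)

lemma wedge_commute: "wedge k w v = wedge k v w"
proof -
  have "wedge k w v = (\<Sum>p | p permutes {..<k}. of_int (sign (inv p)) * (\<Prod>i<k. w i \<bullet> v (inv p i)))"
    unfolding wedge_def by (subst sum_permutations_inverse) simp
  also have "\<dots> = wedge k v w"
    unfolding wedge_def
  proof (rule sum.cong[OF refl])
    fix p assume "p \<in> {p. p permutes {..<k}}"
    then have p: "p permutes {..<k}" by simp
    have "(\<Prod>i<k. w i \<bullet> v (inv p i)) = (\<Prod>i<k. w (p i) \<bullet> v (inv p (p i)))"
      using prod.permute[OF p, of "\<lambda>i. w i \<bullet> v (inv p i)"] by simp
    also have "\<dots> = (\<Prod>i<k. v i \<bullet> w (p i))"
      using permutes_inverses(2)[OF p] by (simp add: inner_commute)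
    moreover have "sign (inv p) = sign p"
      by (metis p sign_inverse finite_lessThan permutation_permutes)
    ultimately show "of_int (sign (inv p)) * (\<Prod>i<k. w i \<bullet> v (inv p i)) =
        of_int (sign p) * (\<Prod>i<k. v i \<bullet> w (p i))"
      by simp
  qed
  finally show ?thesis .
qed

lemma wedge_identical_rows:
  assumes "i < k" "j < k" "i \<noteq> j" "w i = w j"
  shows "wedge k w v = 0"
proof -
  let ?t = "Transposition.transpose i j"
  let ?f = "\<lambda>p. of_int (sign p) * (\<Prod>l<k. w l \<bullet> v (p l))"
  have t: "?t permutes {..<k}"
    using assms by (intro permutes_swap_id) auto
  have "wedge k w v = (\<Sum>p | p permutes {..<k}. ?f (p \<circ> ?t))"
    unfolding wedge_def by (rule sum_permutations_compose_right[OF t])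
  also have "\<dots> = (\<Sum>p | p permutes {..<k}. - ?f p)"
  proof (rule sum.cong[OF refl])
    fix p assume "p \<in> {p. p permutes {..<k}}"
    then have p: "p permutes {..<k}" by simp
    have "sign (p \<circ> ?t) = - sign p"
      using sign_compose[of p ?t] sign_swap_id[of i j] assms
      by (metis finite_lessThan mult_minus1_right p permutation_permutes t)
    moreover have "(\<Prod>l<k. w l \<bullet> v ((p \<circ> ?t) l)) = (\<Prod>l<k. w (?t l) \<bullet> v (p (?t l)))"
      using assms by (auto simp: Transposition.transpose_def intro!: prod.cong)
    moreover have "\<dots> = (\<Prod>l<k. w l \<bullet> v (p l))"
      using prod.permute[OF t, of "\<lambda>l. w l \<bullet> v (p l)"] by simp
    ultimately show "?f (p \<circ> ?t) = - ?f p" by simp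
  qed
  also have "\<dots> = - wedge k w v"
    unfolding wedge_def by (simp add: sum_negf)
  finally show ?thesis by simp
qed

lemma wedge_add_span_other_rows:
  assumes "i < k" "x \<in> span (w ` ({..<k} - {i}))"
  shows "wedge k (w(i := w i + x)) = wedge k w"
proof
  fix v
  from assms(2) show "wedge k (w(i := w i + x)) v = wedge k w v"
  proof (induction rule: span_induct_alt)
    case (step c x y)
    then obtain j where j: "j < k" "j \<noteq> i" "x = w j" by auto
    have "w i + (c *\<^sub>R x + y) = (w i + y) + c *\<^sub>R w j"
      using j by (simp add: algebra_simps)
    then have "wedge k (w(i := w i + (c *\<^sub>R x + y))) v
        = wedge k (w(i := w i + y)) v + c * wedge k (w(i := w j)) v"
      using assms(1) by (simp only: wedge_fun_upd_add wedge_fun_upd_scaleR)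
    also have "wedge k (w(i := w j)) v = 0"
      using j assms(1) by (intro wedge_identical_rows[of i k j]) auto
    finally show ?case
      using step.IH by simp
  qed simp
qed

lemma wedge_orthogonalize:
  assumes "m \<le> k"
  shows "\<exists>w'. wedge k w' = wedge k w \<and> (\<forall>i<m. \<forall>j<m. i \<noteq> j \<longrightarrow> w' i \<bullet> w' j = 0)
           \<and> (\<forall>i\<ge>m. w' i = w i)"
  using assms
proof (induction m)
  case (Suc m)
  then obtain w' where w': "wedge k w' = wedge k w" "\<forall>i<m. \<forall>j<m. i \<noteq> j \<longrightarrow> w' i \<bullet> w' j = 0"
      "\<forall>i\<ge>m. w' i = w i"
    by auto
  have "m < k" using Suc by simp
  define w'' where "w'' = w'(m := w' m - (\<Sum>j<m. ((w' m \<bullet> w' j) / (w' j \<bullet> w' j)) *\<^sub>R w' j))"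
  have correction: "- (\<Sum>j<m. ((w' m \<bullet> w' j) / (w' j \<bullet> w' j)) *\<^sub>R w' j) \<in> span (w' ` ({..<k} - {m}))"
    using \<open>m < k\<close> by (intro span_neg span_sum span_scale span_base) auto
  have "wedge k w'' = wedge k w"
    using wedge_add_span_other_rows[OF \<open>m < k\<close> correction] w'(1) unfolding w''_def by simp
  moreover have "w'' m \<bullet> w' j = 0" if "j < m" for j
  proof -
    have "(\<Sum>l<m. ((w' m \<bullet> w' l) / (w' l \<bullet> w' l)) *\<^sub>R w' l) \<bullet> w' j
        = ((w' m \<bullet> w' j) / (w' j \<bullet> w' j)) * (w' j \<bullet> w' j)"
      unfolding inner_sum_left using that w'(2)
      by (subst sum.remove[of _ j]) (auto intro!: sum.neutral)
    also have "\<dots> = w' m \<bullet> w' j"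
      by (cases "w' j = 0") auto
    finally show ?thesis
      unfolding w''_def by (simp add: inner_diff_left)
  qed
  then have "\<forall>i<Suc m. \<forall>j<Suc m. i \<noteq> j \<longrightarrow> w'' i \<bullet> w'' j = 0"
    using w'(2) by (auto simp: w''_def less_Suc_eq inner_commute)
  moreover have "\<forall>i\<ge>Suc m. w'' i = w i"
    using w'(3) by (simp add: w''_def)
  ultimately show ?case by blast
qed auto

lemma gramdet_eq_wedge: "gramdet k w = wedge k w w"
  unfolding gramdet_def wedge_def ..

lemma wedge_self_orthogonal:
  assumes "\<forall>i<k. \<forall>j<k. i \<noteq> j \<longrightarrow> w i \<bullet> w j = 0"
  shows "wedge k w w = (\<Prod>i<k. w i \<bullet> w i)"
proof -
  have off_diagonal: "(\<Prod>i<k. w i \<bullet> w (p i)) = 0" if "p permutes {..<k}" "p \<noteq> id" for p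
  proof -
    obtain i where i: "p i \<noteq> i" using \<open>p \<noteq> id\<close> by (auto simp: fun_eq_iff)
    then have "i < k" "p i < k"
      using that(1) permutes_not_in permutes_in_image by fastforce+
    then show ?thesis
      using i assms by (intro prod_zero) (auto intro!: bexI[of _ i])
  qed
  have "(\<Sum>p \<in> {p. p permutes {..<k}} - {id}. of_int (sign p) * (\<Prod>i<k. w i \<bullet> w (p i))) = 0"
    by (intro sum.neutral ballI) (simp add: off_diagonal)
  then have "wedge k w w = of_int (sign (id :: nat \<Rightarrow> nat)) * (\<Prod>i<k. w i \<bullet> w (id i))"
    unfolding wedge_def by (subst sum.remove[of _ id]) (auto simp: finite_permutations)
  then show ?thesis by simp
qed

lemma gramdet_eq_prod_norm:
  "\<exists>w'. wedge k w' = wedge k w \<and> gramdet k w = (\<Prod>i<k. norm (w' i))\<^sup>2"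
proof -
  obtain w' where w': "wedge k w' = wedge k w" "\<forall>i<k. \<forall>j<k. i \<noteq> j \<longrightarrow> w' i \<bullet> w' j = 0"
    using wedge_orthogonalize[of k k w] by auto
  have "gramdet k w = wedge k w' w"
    by (simp add: gramdet_eq_wedge w'(1))
  also have "\<dots> = wedge k w w'"
    by (rule wedge_commute)
  also have "\<dots> = wedge k w' w'"
    by (simp add: w'(1))
  also have "\<dots> = (\<Prod>i<k. norm (w' i))\<^sup>2"
    by (simp add: wedge_self_orthogonal[OF w'(2)] power2_norm_eq_inner prod_power_distrib)
  finally show ?thesis using w'(1) by blast
qed

lemma gramdet_nonneg: "0 \<le> gramdet k w"
  using gramdet_eq_prod_norm[of k w] by auto

lemma abs_wedge_le: "\<bar>wedge k w v\<bar> \<le> sqrt (gramdet k w) * (fact k * (\<Prod>j<k. norm (v j)))"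
proof -
  obtain w' where w': "wedge k w' = wedge k w" "gramdet k w = (\<Prod>i<k. norm (w' i))\<^sup>2"
    using gramdet_eq_prod_norm[of k w] by auto
  have term_le: "\<bar>of_int (sign p) * (\<Prod>i<k. w' i \<bullet> v (p i))\<bar> \<le>
      (\<Prod>i<k. norm (w' i)) * (\<Prod>j<k. norm (v j))" if p: "p permutes {..<k}" for p
  proof -
    have "\<bar>of_int (sign p) * (\<Prod>i<k. w' i \<bullet> v (p i))\<bar> = (\<Prod>i<k. \<bar>w' i \<bullet> v (p i)\<bar>)"
      by (simp add: abs_mult abs_prod sign_def)
    also have "\<dots> \<le> (\<Prod>i<k. norm (w' i) * norm (v (p i)))"
      by (intro prod_mono) (simp add: Cauchy_Schwarz_ineq2)
    also have "\<dots> = (\<Prod>i<k. norm (w' i)) * (\<Prod>j<k. norm (v j))"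
      using prod.permute[OF p, of "\<lambda>j. norm (v j)"] by (simp add: prod.distrib)
    finally show ?thesis .
  qed
  have "\<bar>wedge k w v\<bar> = \<bar>wedge k w' v\<bar>"
    by (simp add: w'(1))
  also have "\<dots> \<le> (\<Sum>p | p permutes {..<k}. \<bar>of_int (sign p) * (\<Prod>i<k. w' i \<bullet> v (p i))\<bar>)"
    unfolding wedge_def by (rule sum_abs)
  also have "\<dots> \<le> card {p. p permutes {..<k}} * ((\<Prod>i<k. norm (w' i)) * (\<Prod>j<k. norm (v j)))"
    using term_le by (intro sum_bounded_above) auto
  also have "\<dots> = fact k * ((\<Prod>i<k. norm (w' i)) * (\<Prod>j<k. norm (v j)))"
    by (simp add: card_permutations)
  finally show ?thesis
    by (simp add: w'(2) prod_nonneg algebra_simps)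
qed

instantiation "fun" :: (type, real_vector) real_vector
begin
definition scaleR_fun :: "real \<Rightarrow> ('a \<Rightarrow> 'b) \<Rightarrow> 'a \<Rightarrow> 'b"
  where "scaleR_fun r f = (\<lambda>x. r *\<^sub>R f x)"
instance
  by standard (auto simp: scaleR_fun_def fun_eq_iff algebra_simps)
end

lemma scaleR_fun_apply [simp]: "(c *\<^sub>R f) x = c *\<^sub>R f x"
  by (simp add: scaleR_fun_def)

lemma sum_fun_apply: "(\<Sum>i\<in>S. f i) x = (\<Sum>i\<in>S. f i x)"
  by (induction S rule: infinite_finite_induct) auto

abbreviation wedge_comb :: "nat \<Rightarrow> nat \<Rightarrow> (nat \<Rightarrow> real) \<Rightarrow> (nat \<Rightarrow> nat \<Rightarrow> 'a::euclidean_space) \<Rightarrow> 'a kvec"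
  where "wedge_comb k n c ws \<equiv> (\<lambda>v. \<Sum>i<n. c i * wedge k (ws i) v)"

abbreviation comb_mass :: "nat \<Rightarrow> nat \<Rightarrow> (nat \<Rightarrow> real) \<Rightarrow> (nat \<Rightarrow> nat \<Rightarrow> 'a::euclidean_space) \<Rightarrow> real"
  where "comb_mass k n c ws \<equiv> \<Sum>i<n. \<bar>c i\<bar> * sqrt (gramdet k (ws i))"

lemma sum_lessThan_append:
  "(\<Sum>i<n + m. if i < n then f i else g (i - n)) = (\<Sum>i<n. f i) + (\<Sum>i<m. g i)"
  for m n :: nat
  by (induction m) (auto simp: add.assoc)

lemma wedge_comb_append:
  "wedge_comb k n c ws + wedge_comb k m d us =
     wedge_comb k (n + m) (\<lambda>i. if i < n then c i else d (i - n))
       (\<lambda>i. if i < n then ws i else us (i - n))"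
proof
  fix v
  have "(wedge_comb k n c ws + wedge_comb k m d us) v =
      (\<Sum>i<n + m. if i < n then c i * wedge k (ws i) v else d (i - n) * wedge k (us (i - n)) v)"
    unfolding plus_fun_apply by (rule sum_lessThan_append[symmetric])
  also have "\<dots> = wedge_comb k (n + m) (\<lambda>i. if i < n then c i else d (i - n))
      (\<lambda>i. if i < n then ws i else us (i - n)) v"
    by (rule sum.cong) auto
  finally show "(wedge_comb k n c ws + wedge_comb k m d us) v = wedge_comb k (n + m)
      (\<lambda>i. if i < n then c i else d (i - n)) (\<lambda>i. if i < n then ws i else us (i - n)) v" .
qed

lemma comb_mass_append:
  "comb_mass k n c ws + comb_mass k m d us =
     comb_mass k (n + m) (\<lambda>i. if i < n then c i else d (i - n))
       (\<lambda>i. if i < n then ws i else us (i - n))"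
proof -
  have "comb_mass k n c ws + comb_mass k m d us = (\<Sum>i<n + m. if i < n
      then \<bar>c i\<bar> * sqrt (gramdet k (ws i)) else \<bar>d (i - n)\<bar> * sqrt (gramdet k (us (i - n))))"
    by (rule sum_lessThan_append[symmetric])
  also have "\<dots> = comb_mass k (n + m) (\<lambda>i. if i < n then c i else d (i - n))
      (\<lambda>i. if i < n then ws i else us (i - n))"
    by (rule sum.cong) auto
  finally show ?thesis .
qed

lemma wedge_comb_in_Lambda: "wedge_comb k n c ws \<in> Lambda k"
  unfolding Lambda_def by blast

lemma subspace_Lambda: "subspace (Lambda k)"
  unfolding subspace_def
proof (intro conjI ballI allI)
  show "0 \<in> Lambda k"
    using wedge_comb_in_Lambda[where k = k and n = 0] by (simp add: zero_fun_def)
next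
  fix \<alpha> \<beta> :: "'a kvec" assume "\<alpha> \<in> Lambda k" "\<beta> \<in> Lambda k"
  then obtain n c ws m d us where "\<alpha> = wedge_comb k n c ws" "\<beta> = wedge_comb k m d us"
    unfolding Lambda_def by blast
  then show "\<alpha> + \<beta> \<in> Lambda k"
    by (simp only: wedge_comb_append wedge_comb_in_Lambda)
next
  fix a and \<alpha> :: "'a kvec" assume "\<alpha> \<in> Lambda k"
  then obtain n c ws where "\<alpha> = wedge_comb k n c ws"
    unfolding Lambda_def by blast
  then have "a *\<^sub>R \<alpha> = wedge_comb k n (\<lambda>i. a * c i) ws"
    by (simp add: fun_eq_iff sum_distrib_left mult.assoc)
  then show "a *\<^sub>R \<alpha> \<in> Lambda k"
    by (simp add: wedge_comb_in_Lambda)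
qed

lemma wedge_in_Lambda: "wedge k w \<in> Lambda k"
  using wedge_comb_in_Lambda[where k = k and n = 1 and c = "\<lambda>_. 1" and ws = "\<lambda>_. w"] by simp

lemma simple_in_Lambda: "simple k \<alpha> \<Longrightarrow> \<alpha> \<in> Lambda k"
  unfolding simple_def using wedge_comb_in_Lambda[where n = 1 and k = k] by fastforce

lemma wedge_comb_eq_sum: "wedge_comb k n c ws = (\<Sum>i<n. c i *\<^sub>R wedge k (ws i))"
  by (simp add: fun_eq_iff sum_fun_apply)

lemma wedge_eq_sum_basis_wedges:
  "wedge k w = (\<Sum>J\<in>PiE {..<k} (\<lambda>_. Basis). (\<Prod>i<k. w i \<bullet> J i) *\<^sub>R wedge k J)"
proof
  fix v :: "nat \<Rightarrow> 'a"
  let ?P = "PiE {..<k} (\<lambda>_. Basis :: 'a set)"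
  have "(\<Prod>i<k. w i \<bullet> v (p i)) = (\<Sum>J\<in>?P. (\<Prod>i<k. w i \<bullet> J i) * (\<Prod>i<k. J i \<bullet> v (p i)))" for p
  proof -
    have "(\<Prod>i<k. w i \<bullet> v (p i)) = (\<Prod>i<k. \<Sum>b\<in>Basis. (w i \<bullet> b) * (b \<bullet> v (p i)))"
      by (subst euclidean_inner) (simp add: inner_commute)
    also have "\<dots> = (\<Sum>J\<in>?P. \<Prod>i<k. (w i \<bullet> J i) * (J i \<bullet> v (p i)))"
      by (rule prod_sum_PiE) auto
    finally show ?thesis
      by (simp add: prod.distrib)
  qed
  then have "wedge k w v = (\<Sum>p | p permutes {..<k}. \<Sum>J\<in>?P. of_int (sign p) *
      ((\<Prod>i<k. w i \<bullet> J i) * (\<Prod>i<k. J i \<bullet> v (p i))))"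
    unfolding wedge_def by (simp add: sum_distrib_left)
  also have "\<dots> = (\<Sum>J\<in>?P. (\<Prod>i<k. w i \<bullet> J i) * wedge k J v)"
    unfolding wedge_def sum_distrib_left by (subst sum.swap) (simp add: algebra_simps)
  finally show "wedge k w v = (\<Sum>J\<in>?P. (\<Prod>i<k. w i \<bullet> J i) *\<^sub>R wedge k J) v"
    by (simp add: sum_fun_apply)
qed

lemma wedge_in_span_basis_wedges: "wedge k w \<in> span (wedge k ` PiE {..<k} (\<lambda>_. Basis))"
  by (subst wedge_eq_sum_basis_wedges) (intro span_sum span_scale span_base imageI)

lemma Lambda_eq_span_basis_wedges: "Lambda k = span (wedge k ` PiE {..<k} (\<lambda>_. Basis))"
proof
  show "span (wedge k ` PiE {..<k} (\<lambda>_. Basis)) \<subseteq> Lambda k"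
    by (intro span_minimal subspace_Lambda) (auto intro: wedge_in_Lambda)
  show "Lambda k \<subseteq> span (wedge k ` PiE {..<k} (\<lambda>_. Basis))"
    unfolding Lambda_def
    by (auto simp: wedge_comb_eq_sum intro!: span_sum span_scale wedge_in_span_basis_wedges)
qed

section \<open>Mass\<close>

lemma mass_le_comb_mass: "\<alpha> = wedge_comb k n c ws \<Longrightarrow> mass k \<alpha> \<le> comb_mass k n c ws"
  unfolding mass_def
  by (rule cInf_lower) (auto intro!: bdd_belowI[of _ 0] sum_nonneg simp: gramdet_nonneg)

lemma mass_greatest:
  assumes "\<alpha> \<in> Lambda k" and "\<And>n c ws. \<alpha> = wedge_comb k n c ws \<Longrightarrow> x \<le> comb_mass k n c ws"
  shows "x \<le> mass k \<alpha>"
  unfolding mass_def using assms unfolding Lambda_def by (intro cInf_greatest) auto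

lemma mult_mass_greatest:
  assumes "\<alpha> \<in> Lambda k" and "0 \<le> N"
    and "\<And>n c ws. \<alpha> = wedge_comb k n c ws \<Longrightarrow> x \<le> N * comb_mass k n c ws"
  shows "x \<le> N * mass k \<alpha>"
proof (cases "N = 0")
  case True
  obtain n c ws where "\<alpha> = wedge_comb k n c ws"
    using assms(1) unfolding Lambda_def by blast
  then show ?thesis using assms(3) True by simp
next
  case False
  then have "x / N \<le> mass k \<alpha>"
    using assms by (intro mass_greatest) (auto simp: divide_le_eq mult.commute)
  then show ?thesis
    using False assms(2) by (simp add: divide_le_eq mult.commute)
qed

lemma mass_nonneg: "\<alpha> \<in> Lambda k \<Longrightarrow> 0 \<le> mass k \<alpha>"
  by (rule mass_greatest) (auto intro!: sum_nonneg simp: gramdet_nonneg)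

lemma abs_apply_le_mass:
  assumes "\<alpha> \<in> Lambda k"
  shows "\<bar>\<alpha> v\<bar> \<le> (fact k * (\<Prod>j<k. norm (v j))) * mass k \<alpha>"
proof (rule mult_mass_greatest[OF assms])
  fix n c ws assume "\<alpha> = wedge_comb k n c ws"
  then have "\<bar>\<alpha> v\<bar> \<le> (\<Sum>i<n. \<bar>c i\<bar> * \<bar>wedge k (ws i) v\<bar>)"
    using sum_abs[of "\<lambda>i. c i * wedge k (ws i) v" "{..<n}"] by (simp add: abs_mult)
  also have "\<dots> \<le> (\<Sum>i<n. \<bar>c i\<bar> * (sqrt (gramdet k (ws i)) * (fact k * (\<Prod>j<k. norm (v j)))))"
    by (intro sum_mono mult_left_mono abs_wedge_le) auto
  finally show "\<bar>\<alpha> v\<bar> \<le> (fact k * (\<Prod>j<k. norm (v j))) * comb_mass k n c ws"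
    by (simp add: sum_distrib_left algebra_simps)
qed (simp add: prod_nonneg)

lemma mass_zero [simp]: "mass k 0 = 0"
proof -
  have "mass k (0 :: 'a kvec) \<le> 0"
    using mass_le_comb_mass[where \<alpha> = 0 and n = 0 and k = k] by (simp add: zero_fun_def)
  moreover have "0 \<le> mass k (0 :: 'a kvec)"
    by (rule mass_nonneg[OF subspace_0[OF subspace_Lambda]])
  ultimately show ?thesis by simp
qed

lemma mass_eq_0_iff:
  assumes "\<alpha> \<in> Lambda k"
  shows "mass k \<alpha> = 0 \<longleftrightarrow> \<alpha> = 0"
proof
  assume "mass k \<alpha> = 0"
  then show "\<alpha> = 0"
    using abs_apply_le_mass[OF assms] by (simp add: fun_eq_iff)
qed simp

lemma mass_add_le:
  assumes "\<alpha> \<in> Lambda k" "\<beta> \<in> Lambda k"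
  shows "mass k (\<alpha> + \<beta>) \<le> mass k \<alpha> + mass k \<beta>"
proof -
  have "mass k (\<alpha> + \<beta>) - mass k \<beta> \<le> mass k \<alpha>"
  proof (rule mass_greatest[OF assms(1)])
    fix n c ws assume \<alpha>: "\<alpha> = wedge_comb k n c ws"
    have "mass k (\<alpha> + \<beta>) - comb_mass k n c ws \<le> mass k \<beta>"
    proof (rule mass_greatest[OF assms(2)])
      fix m d us assume "\<beta> = wedge_comb k m d us"
      then have "\<alpha> + \<beta> = wedge_comb k (n + m) (\<lambda>i. if i < n then c i else d (i - n))
          (\<lambda>i. if i < n then ws i else us (i - n))"
        using \<alpha> by (simp only: wedge_comb_append)
      then have "mass k (\<alpha> + \<beta>) \<le> comb_mass k n c ws + comb_mass k m d us"
        unfolding comb_mass_append by (rule mass_le_comb_mass)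
      then show "mass k (\<alpha> + \<beta>) - comb_mass k n c ws \<le> comb_mass k m d us"
        by simp
    qed
    then show "mass k (\<alpha> + \<beta>) - mass k \<beta> \<le> comb_mass k n c ws"
      by simp
  qed
  then show ?thesis by simp
qed

lemma mass_scaleR_le:
  assumes "\<alpha> \<in> Lambda k"
  shows "mass k (a *\<^sub>R \<alpha>) \<le> \<bar>a\<bar> * mass k \<alpha>"
proof (rule mult_mass_greatest[OF assms])
  fix n c ws assume "\<alpha> = wedge_comb k n c ws"
  then have "a *\<^sub>R \<alpha> = wedge_comb k n (\<lambda>i. a * c i) ws"
    by (simp add: fun_eq_iff sum_distrib_left mult.assoc)
  then have "mass k (a *\<^sub>R \<alpha>) \<le> comb_mass k n (\<lambda>i. a * c i) ws"
    by (rule mass_le_comb_mass)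
  then show "mass k (a *\<^sub>R \<alpha>) \<le> \<bar>a\<bar> * comb_mass k n c ws"
    by (simp add: sum_distrib_left abs_mult mult.assoc)
qed simp

lemma mass_scaleR:
  assumes "\<alpha> \<in> Lambda k"
  shows "mass k (a *\<^sub>R \<alpha>) = \<bar>a\<bar> * mass k \<alpha>"
proof (cases "a = 0")
  case True
  then show ?thesis by simp
next
  case False
  have "mass k \<alpha> = mass k ((1 / a) *\<^sub>R (a *\<^sub>R \<alpha>))"
    using False by simp
  also have "\<dots> \<le> \<bar>1 / a\<bar> * mass k (a *\<^sub>R \<alpha>)"
    using assms by (intro mass_scaleR_le subspace_scale[OF subspace_Lambda])
  finally have "\<bar>a\<bar> * mass k \<alpha> \<le> mass k (a *\<^sub>R \<alpha>)"
    using False by (simp add: field_simps)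
  with mass_scaleR_le[OF assms, of a] show ?thesis by simp
qed

lemma mass_wedge_le: "mass k (wedge k w) \<le> sqrt (gramdet k w)"
  using mass_le_comb_mass[where n = 1 and c = "\<lambda>_. 1" and ws = "\<lambda>_. w" and k = k] by simp

section \<open>Hahn-Banach in finite dimension\<close>

lemma linear_le_on_span_insert:
  fixes M :: "'v::real_vector \<Rightarrow> real"
  assumes \<psi>: "linear \<psi>"
    and M_scale: "\<And>y a. y \<in> span (insert x A) \<Longrightarrow> M (a *\<^sub>R y) = \<bar>a\<bar> * M y"
    and le: "\<And>s. s \<in> span A \<Longrightarrow> \<psi> s \<le> M s"
    and plus_x: "\<And>s. s \<in> span A \<Longrightarrow> \<psi> (s + x) \<le> M (s + x)"
    and minus_x: "\<And>s. s \<in> span A \<Longrightarrow> \<psi> (s - x) \<le> M (s - x)"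
    and y: "y \<in> span (insert x A)"
  shows "\<psi> y \<le> M y"
proof -
  obtain t where s: "y - t *\<^sub>R x \<in> span A"
    using y span_breakdown_eq by blast
  show ?thesis
  proof (cases "t = 0")
    case True
    then show ?thesis using s le by simp
  next
    case False
    define z where "z = (1 / \<bar>t\<bar>) *\<^sub>R (y - t *\<^sub>R x) + sgn t *\<^sub>R x"
    have y_eq: "y = \<bar>t\<bar> *\<^sub>R z"
      using False by (simp add: z_def algebra_simps abs_mult_sgn)
    have "span A \<subseteq> span (insert x A)"
      by (rule span_mono) auto
    then have "z \<in> span (insert x A)"
      unfolding z_def using s by (intro span_add span_scale) (auto intro: span_base)
    moreover have "\<psi> z \<le> M z"
    proof (cases "t > 0")
      case True
      then show ?thesis
        using plus_x[OF span_scale[OF s]] by (simp add: z_def)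
    next
      case False
      with \<open>t \<noteq> 0\<close> have "sgn t = -1" by simp
      then show ?thesis
        using minus_x[OF span_scale[OF s]] by (simp add: z_def)
    qed
    ultimately have "\<bar>t\<bar> * \<psi> z \<le> M (\<bar>t\<bar> *\<^sub>R z)"
      using M_scale by (simp add: mult_left_mono)
    then show ?thesis
      using y_eq linear_scale[OF \<psi>] by simp
  qed
qed

lemma linear_extension_le:
  fixes M :: "'v::real_vector \<Rightarrow> real"
  assumes x: "x \<notin> span A"
    and M_scale: "\<And>y a. y \<in> span (insert x A) \<Longrightarrow> M (a *\<^sub>R y) = \<bar>a\<bar> * M y"
    and \<phi>: "linear \<phi>" "\<forall>y\<in>span A. \<phi> y \<le> M y"
    and lower: "\<forall>s\<in>span A. \<phi> s - M (s - x) \<le> c"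
    and upper: "\<forall>s\<in>span A. c \<le> M (s + x) - \<phi> s"
  shows "\<exists>\<psi>. linear \<psi> \<and> \<psi> x = c \<and> (\<forall>y\<in>span A. \<psi> y = \<phi> y) \<and>
           (\<forall>y\<in>span (insert x A). \<psi> y \<le> M y)"
proof -
  obtain B where B: "B \<subseteq> span A" "independent B" "span A \<subseteq> span B"
    using maximal_independent_subset by blast
  have span_B: "span B = span A"
    using B span_mono[OF B(1)] by (simp add: span_span subset_antisym)
  have "independent (insert x B)"
    using x B(2) span_B by (simp add: independent_insertI)
  then obtain \<psi> where \<psi>: "linear \<psi>" "\<forall>b\<in>insert x B. \<psi> b = (if b = x then c else \<phi> b)"
    using linear_independent_extend[of "insert x B" "\<lambda>b. if b = x then c else \<phi> b"] by auto
  have "x \<notin> B"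
    using x B(1) span_base by blast
  then have "\<psi> b = \<phi> b" if "b \<in> B" for b
    using that \<psi>(2) by auto
  then have agree: "\<forall>y\<in>span A. \<psi> y = \<phi> y"
    using linear_eq_on_span[OF \<psi>(1) \<phi>(1)] span_B by blast
  have \<psi>_x: "\<psi> x = c"
    using \<psi>(2) by simp
  have "\<psi> y \<le> M y" if "y \<in> span (insert x A)" for y
  proof (rule linear_le_on_span_insert[OF \<psi>(1) M_scale _ _ _ that])
    fix s assume "s \<in> span A"
    then show "\<psi> s \<le> M s" "\<psi> (s + x) \<le> M (s + x)" "\<psi> (s - x) \<le> M (s - x)"
      using agree \<phi>(2) lower upper \<psi>_x linear_add[OF \<psi>(1)] linear_diff[OF \<psi>(1)] by force+
  qed
  then show ?thesis using \<psi>(1) \<psi>_x agree by blast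
qed

lemma sublinear_extension_constant:
  fixes M :: "'v::real_vector \<Rightarrow> real"
  assumes M_add: "\<And>y z. y \<in> span (insert x A) \<Longrightarrow> z \<in> span (insert x A) \<Longrightarrow> M (y + z) \<le> M y + M z"
    and \<phi>: "linear \<phi>" "\<forall>y\<in>span A. \<phi> y \<le> M y"
  shows "\<exists>c. (\<forall>s\<in>span A. \<phi> s - M (s - x) \<le> c) \<and> (\<forall>s\<in>span A. c \<le> M (s + x) - \<phi> s)"
proof -
  have span_A: "span A \<subseteq> span (insert x A)"
    by (rule span_mono) auto
  have between: "\<phi> s - M (s - x) \<le> M (s' + x) - \<phi> s'" if "s \<in> span A" "s' \<in> span A" for s s'
  proof -
    have "\<phi> s + \<phi> s' \<le> M (s + s')"
      using that \<phi> by (simp add: linear_add[symmetric] span_add)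
    also have "\<dots> \<le> M (s - x) + M (s' + x)"
      using M_add[of "s - x" "s' + x"] that span_A
      by (auto intro: span_diff span_add span_base)
    finally show ?thesis by simp
  qed
  define L where "L = (\<lambda>s. \<phi> s - M (s - x)) ` span A"
  have "L \<noteq> {}"
    using span_zero[of A] by (auto simp: L_def)
  moreover have "bdd_above L"
    using between[OF _ span_zero] by (intro bdd_aboveI[of _ "M (0 + x) - \<phi> 0"]) (auto simp: L_def)
  ultimately have "(\<forall>s\<in>span A. \<phi> s - M (s - x) \<le> Sup L) \<and> (\<forall>s\<in>span A. Sup L \<le> M (s + x) - \<phi> s)"
    using between by (auto simp: L_def intro: cSup_upper cSup_least)
  then show ?thesis by blast
qed

lemma dominated_linear_functional_on_line:
  fixes M :: "'v::real_vector \<Rightarrow> real"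
  assumes M_add: "\<And>y z. y \<in> span {x} \<Longrightarrow> z \<in> span {x} \<Longrightarrow> M (y + z) \<le> M y + M z"
    and M_scale: "\<And>y a. y \<in> span {x} \<Longrightarrow> M (a *\<^sub>R y) = \<bar>a\<bar> * M y"
  shows "\<exists>\<phi>. linear \<phi> \<and> \<phi> x = M x \<and> (\<forall>y\<in>span {x}. \<phi> y \<le> M y)"
proof -
  have M0: "M 0 = 0"
    using M_scale[of 0 0] by (simp add: span_zero)
  show ?thesis
  proof (cases "x = 0")
    case True
    then show ?thesis
      using M0 by (intro exI[of _ "\<lambda>_. 0"]) (auto simp: linear_zero)
  next
    case False
    have "M (- x) = M x"
      using M_scale[of x "- 1"] by (simp add: span_base)
    moreover have "M 0 \<le> M x + M (- x)"
      using M_add[of x "- x"] by (simp add: span_base span_neg)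
    ultimately have "0 \<le> M x"
      using M0 by simp
    then have "\<exists>\<psi>. linear \<psi> \<and> \<psi> x = M x \<and> (\<forall>y\<in>span {}. \<psi> y = 0) \<and> (\<forall>y\<in>span {x}. \<psi> y \<le> M y)"
      using False M_scale \<open>M (- x) = M x\<close>
      by (intro linear_extension_le) (auto simp: linear_zero M0)
    then show ?thesis by auto
  qed
qed

lemma hahn_banach_finite_span:
  fixes M :: "'v::real_vector \<Rightarrow> real"
  assumes "finite G"
    and M_add: "\<And>y z. y \<in> span G \<Longrightarrow> z \<in> span G \<Longrightarrow> M (y + z) \<le> M y + M z"
    and M_scale: "\<And>y a. y \<in> span G \<Longrightarrow> M (a *\<^sub>R y) = \<bar>a\<bar> * M y"
    and x0: "x0 \<in> span G"
  shows "\<exists>\<phi>. linear \<phi> \<and> \<phi> x0 = M x0 \<and> (\<forall>y\<in>span G. \<phi> y \<le> M y)"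
proof -
  have "\<exists>\<phi>. linear \<phi> \<and> \<phi> x0 = M x0 \<and> (\<forall>y\<in>span (insert x0 H). \<phi> y \<le> M y)"
    if "finite H" "H \<subseteq> span G" for H
    using that
  proof (induction H rule: finite_induct)
    case empty
    have "span {x0} \<subseteq> span G"
      using x0 by (simp add: span_minimal)
    then show ?case
      by (intro dominated_linear_functional_on_line M_add M_scale) auto
  next
    case (insert h H)
    then obtain \<phi> where \<phi>: "linear \<phi>" "\<phi> x0 = M x0" "\<forall>y\<in>span (insert x0 H). \<phi> y \<le> M y"
      by auto
    have sub: "span (insert h (insert x0 H)) \<subseteq> span G"
      using insert.prems x0 by (intro span_minimal) auto
    show ?case
    proof (cases "h \<in> span (insert x0 H)")
      case True
      then show ?thesis
        using \<phi> span_redundant[OF True] by (metis insert_commute)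
    next
      case False
      obtain c where "\<forall>s\<in>span (insert x0 H). \<phi> s - M (s - h) \<le> c"
          "\<forall>s\<in>span (insert x0 H). c \<le> M (s + h) - \<phi> s"
        using sublinear_extension_constant[OF _ \<phi>(1,3)] M_add sub by blast
      then obtain \<psi> where "linear \<psi>" "\<forall>y\<in>span (insert x0 H). \<psi> y = \<phi> y"
          "\<forall>y\<in>span (insert h (insert x0 H)). \<psi> y \<le> M y"
        using linear_extension_le[OF False _ \<phi>(1,3)] M_scale sub by blast
      then show ?thesis
        using \<phi>(2) by (intro exI[of _ \<psi>]) (auto simp: insert_commute span_base)
    qed
  qed
  from this[OF \<open>finite G\<close> span_superset] show ?thesis
    using span_mono[of G "insert x0 G"] by blast
qed

lemma exists_norming_functional_mass:
  assumes "\<alpha> \<in> Lambda k"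
  shows "\<exists>\<phi>. linear \<phi> \<and> \<phi> \<alpha> = mass k \<alpha> \<and> (\<forall>\<beta>\<in>Lambda k. \<bar>\<phi> \<beta>\<bar> \<le> mass k \<beta>)"
proof -
  obtain \<phi> where \<phi>: "linear \<phi>" "\<phi> \<alpha> = mass k \<alpha>" "\<forall>\<beta>\<in>Lambda k. \<phi> \<beta> \<le> mass k \<beta>"
    using hahn_banach_finite_span[of "wedge k ` PiE {..<k} (\<lambda>_. Basis)" "mass k" \<alpha>] assms
    unfolding Lambda_eq_span_basis_wedges[symmetric]
    by (auto simp: mass_add_le mass_scaleR finite_PiE)
  have "\<bar>\<phi> \<beta>\<bar> \<le> mass k \<beta>" if "\<beta> \<in> Lambda k" for \<beta>
    using \<phi>(3) that subspace_neg[OF subspace_Lambda that] mass_scaleR[OF that, of "- 1"]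
      linear_neg[OF \<phi>(1), of \<beta>]
    by (auto simp: abs_le_iff)
  then show ?thesis using \<phi> by blast
qed

section \<open>Monopolar chains\<close>

lemma not_in_supp: "q \<notin> supp P \<Longrightarrow> P q = 0"
  by (simp add: supp_def zero_fun_def)

lemma supp_add: "supp (P + Q) \<subseteq> supp P \<union> supp Q"
  by (auto simp: supp_def fun_eq_iff)

lemma supp_diff: "supp (P - Q) \<subseteq> supp P \<union> supp Q"
  by (auto simp: supp_def fun_eq_iff)

lemma supp_scaleR: "supp (c *\<^sub>R P) \<subseteq> supp P"
  by (auto simp: supp_def fun_eq_iff)

lemma supp_transl: "supp (transl u P) = (\<lambda>q. q + u) ` supp P"
  by (force simp: supp_def transl_def image_iff)

lemma supp_dirac: "supp (dirac p \<alpha>) \<subseteq> {p}"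
  by (auto simp: supp_def dirac_def)

lemma subspace_chains: "subspace (chains k)"
  unfolding subspace_def
proof (intro conjI ballI allI)
  show "0 \<in> chains k"
    using subspace_0[OF subspace_Lambda] by (simp add: chains_def supp_def zero_fun_def)
next
  fix P Q :: "'a chain" assume "P \<in> chains k" "Q \<in> chains k"
  then show "P + Q \<in> chains k"
    using supp_add[of P Q]
    by (auto simp: chains_def intro: finite_subset subspace_add[OF subspace_Lambda])
next
  fix c and P :: "'a chain" assume "P \<in> chains k"
  then show "c *\<^sub>R P \<in> chains k"
    using supp_scaleR[of c P]
    by (auto simp: chains_def intro: finite_subset subspace_scale[OF subspace_Lambda])
qed

lemma dirac_in_chains: "\<alpha> \<in> Lambda k \<Longrightarrow> dirac p \<alpha> \<in> chains k"
  using finite_subset[OF supp_dirac] subspace_0[OF subspace_Lambda]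
  by (auto simp: chains_def dirac_def zero_fun_def)

lemma diffop_eq_transl_minus: "diffop u P = transl u P - P"
  by (simp add: diffop_def fun_eq_iff)

lemma diffop_in_chains: "P \<in> chains k \<Longrightarrow> diffop u P \<in> chains k"
  unfolding diffop_eq_transl_minus
proof (rule subspace_diff[OF subspace_chains])
  assume "P \<in> chains k"
  then show "transl u P \<in> chains k"
    unfolding chains_def mem_Collect_eq supp_transl by (simp add: transl_def)
qed

lemma dirac_scaleR: "dirac p (c *\<^sub>R \<alpha>) = c *\<^sub>R dirac p \<alpha>"
  by (simp add: dirac_def fun_eq_iff)

lemma dirac_sum: "dirac p (\<Sum>i\<in>S. f i) = (\<Sum>i\<in>S. dirac p (f i))"
  by (simp add: dirac_def fun_eq_iff sum_fun_apply)

lemma diffop_scaleR: "diffop u (c *\<^sub>R P) = c *\<^sub>R diffop u P"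
  by (simp add: diffop_def transl_def fun_eq_iff algebra_simps)

lemma diffop_dirac: "diffop u (dirac p \<alpha>) = dirac (p + u) \<alpha> - dirac p \<alpha>"
  by (auto simp: diffop_def transl_def dirac_def fun_eq_iff)

lemma vec0_eq_sum: "vec0 P = (\<Sum>q\<in>supp P. P q)"
  by (simp add: vec0_def fun_eq_iff sum_fun_apply)

lemma vec0_eq_sum_superset:
  assumes "finite A" "supp P \<subseteq> A"
  shows "vec0 P = (\<Sum>q\<in>A. P q)"
  unfolding vec0_eq_sum using assms by (intro sum.mono_neutral_left) (auto simp: not_in_supp)

lemma vec0_add:
  assumes "finite (supp P)" "finite (supp Q)"
  shows "vec0 (P + Q) = vec0 P + vec0 Q"
  using assms supp_add[of P Q]
  by (simp add: vec0_eq_sum_superset[of "supp P \<union> supp Q"] sum.distrib)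

lemma vec0_diff:
  assumes "finite (supp P)" "finite (supp Q)"
  shows "vec0 (P - Q) = vec0 P - vec0 Q"
  using assms supp_diff[of P Q]
  by (simp add: vec0_eq_sum_superset[of "supp P \<union> supp Q"] sum_subtractf)

lemma vec0_scaleR:
  assumes "finite (supp P)"
  shows "vec0 (c *\<^sub>R P) = c *\<^sub>R vec0 P"
  using assms supp_scaleR[of c P]
  by (simp add: vec0_eq_sum_superset[of "supp P"] scaleR_sum_right)

lemma vec0_dirac: "vec0 (dirac p \<alpha>) = \<alpha>"
  by (subst vec0_eq_sum_superset[OF _ supp_dirac]) (simp_all add: dirac_def)

lemma vec0_transl:
  assumes "finite (supp P)"
  shows "vec0 (transl u P) = vec0 P"
proof -
  have "vec0 (transl u P) = (\<Sum>q\<in>(\<lambda>q. q + u) ` supp P. transl u P q)"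
    unfolding vec0_eq_sum supp_transl ..
  also have "\<dots> = vec0 P"
    by (simp add: vec0_eq_sum sum.reindex inj_on_def transl_def)
  finally show ?thesis .
qed

lemma vec0_diffops:
  assumes "P \<in> chains k" "U \<noteq> []"
  shows "vec0 (diffops U P) = 0"
proof -
  obtain u U' where U: "U = u # U'"
    using assms(2) by (cases U) auto
  have "diffops U' P \<in> chains k"
    using assms(1) by (induction U') (auto intro: diffop_in_chains)
  then have "finite (supp (diffops U' P))" "finite (supp (transl u (diffops U' P)))"
    by (auto simp: chains_def supp_transl)
  then show ?thesis
    by (simp add: U diffop_eq_transl_minus vec0_diff vec0_transl)
qed

lemma vec0_in_Lambda: "P \<in> chains k \<Longrightarrow> vec0 P \<in> Lambda k"
  unfolding vec0_eq_sum chains_def by (auto intro: subspace_sum[OF subspace_Lambda])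

lemma chain_eq_sum_dirac: "finite (supp P) \<Longrightarrow> P = (\<Sum>q\<in>supp P. dirac q (P q))"
  by (auto simp: fun_eq_iff sum_fun_apply dirac_def not_in_supp if_distrib[of "\<lambda>f. f _"]
      cong: if_cong)

lemma chain_eq_dirac_vec0_plus_diffops:
  assumes "finite (supp P)"
  shows "P = dirac p (vec0 P) + (\<Sum>q\<in>supp P. diffop (q - p) (dirac p (P q)))"
proof -
  have "dirac p (vec0 P) + (\<Sum>q\<in>supp P. diffop (q - p) (dirac p (P q)))
      = (\<Sum>q\<in>supp P. dirac p (P q)) + (\<Sum>q\<in>supp P. dirac q (P q) - dirac p (P q))"
    by (simp add: vec0_eq_sum dirac_sum diffop_dirac)
  also have "\<dots> = (\<Sum>q\<in>supp P. dirac q (P q))"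
    by (simp add: sum_subtractf)
  also have "\<dots> = P"
    using chain_eq_sum_dirac[OF assms] by simp
  finally show ?thesis by simp
qed

section \<open>Forms and their norms\<close>

lemma form_add:
  "is_form k \<omega> \<Longrightarrow> P \<in> chains k \<Longrightarrow> Q \<in> chains k \<Longrightarrow> \<omega> (P + Q) = \<omega> P + \<omega> Q"
  unfolding is_form_def plus_fun_def by simp

lemma form_scaleR: "is_form k \<omega> \<Longrightarrow> P \<in> chains k \<Longrightarrow> \<omega> (c *\<^sub>R P) = c * \<omega> P"
  unfolding is_form_def scaleR_fun_def by simp

lemma form_zero: "is_form k \<omega> \<Longrightarrow> \<omega> 0 = 0"
  using form_scaleR[OF _ subspace_0[OF subspace_chains], of k \<omega> 0] by simp

lemma form_sum:
  assumes "is_form k \<omega>" "finite S" "\<And>i. i \<in> S \<Longrightarrow> Q i \<in> chains k"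
  shows "\<omega> (\<Sum>i\<in>S. Q i) = (\<Sum>i\<in>S. \<omega> (Q i))"
  using assms(2,3)
  by (induction S rule: finite_induct)
    (simp_all add: form_zero[OF assms(1)] form_add[OF assms(1)] subspace_sum[OF subspace_chains])

lemma is_form_linear_vec0:
  assumes "linear \<phi>"
  shows "is_form k (\<lambda>P. \<phi> (vec0 P))"
  unfolding is_form_def
proof (intro conjI ballI allI)
  fix P Q :: "'a chain" assume "P \<in> chains k" "Q \<in> chains k"
  moreover have "(\<lambda>p v. P p v + Q p v) = P + Q"
    by (simp add: fun_eq_iff)
  ultimately show "\<phi> (vec0 (\<lambda>p v. P p v + Q p v)) = \<phi> (vec0 P) + \<phi> (vec0 Q)"
    by (simp add: chains_def vec0_add linear_add[OF assms])
next
  fix c and P :: "'a chain" assume "P \<in> chains k"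
  moreover have "(\<lambda>p v. c * P p v) = c *\<^sub>R P"
    by (simp add: fun_eq_iff)
  ultimately show "\<phi> (vec0 (\<lambda>p v. c * P p v)) = c * \<phi> (vec0 P)"
    by (simp add: chains_def vec0_scaleR linear_scale[OF assms])
qed

lemma SUP_abs_eq_minf_or_nonneg:
  "(SUP x\<in>S. ereal \<bar>f x\<bar>) = -\<infinity> \<or> 0 \<le> (SUP x\<in>S. ereal \<bar>f x\<bar>)"
proof (cases "S = {}")
  case False
  then obtain x where "x \<in> S" by blast
  then have "ereal \<bar>f x\<bar> \<le> (SUP x\<in>S. ereal \<bar>f x\<bar>)"
    by (rule SUP_upper)
  then show ?thesis
    by (auto intro: order_trans[rotated])
qed (simp add: bot_ereal_def)

lemma form_normj_cases: "form_normj k \<omega> j = -\<infinity> \<or> 0 \<le> form_normj k \<omega> j"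
  unfolding form_normj_def by (simp add: SUP_abs_eq_minf_or_nonneg)

lemma form_natnorm_cases: "form_natnorm k r \<omega> = -\<infinity> \<or> 0 \<le> form_natnorm k r \<omega>"
proof -
  have "form_natnorm k r \<omega> \<in> form_normj k \<omega> ` {..r}"
    unfolding form_natnorm_def by (rule Max_in) auto
  then obtain j where "form_natnorm k r \<omega> = form_normj k \<omega> j"
    by blast
  then show ?thesis
    using form_normj_cases[of k \<omega> j] by simp
qed

lemma real_of_form_natnorm_nonneg: "0 \<le> real_of_ereal (form_natnorm k r \<omega>)"
  using form_natnorm_cases[of k r \<omega>] by (auto simp: real_of_ereal_pos)

lemma form_natnorm_le_real_of:
  "form_natnorm k r \<omega> \<noteq> \<infinity> \<Longrightarrow> form_natnorm k r \<omega> \<le> ereal (real_of_ereal (form_natnorm k r \<omega>))"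
  by (cases "form_natnorm k r \<omega>") auto

lemma form_normj_le_natnorm: "j \<le> r \<Longrightarrow> form_normj k \<omega> j \<le> form_natnorm k r \<omega>"
  unfolding form_natnorm_def by (rule Max_ge) auto

lemma form_normj_0_ge:
  "simple k \<alpha> \<Longrightarrow> mass k \<alpha> = 1 \<Longrightarrow> ereal \<bar>\<omega> (dirac p \<alpha>)\<bar> \<le> form_normj k \<omega> 0"
  unfolding form_normj_def by (force intro: SUP_upper2)

lemma form_normj_1_ge:
  "\<alpha> \<in> Lambda k \<Longrightarrow> norm u * mass k \<alpha> = 1 \<Longrightarrow> ereal \<bar>\<omega> (diffop u (dirac p \<alpha>))\<bar> \<le> form_normj k \<omega> 1"
  unfolding form_normj_def by (force intro: SUP_upper2[where i = "([u], p, \<alpha>)"])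

lemma abs_form_dirac_wedge_le:
  assumes form: "is_form k \<omega>" and N: "form_normj k \<omega> 0 \<le> ereal N" "0 \<le> N"
  shows "\<bar>\<omega> (dirac p (wedge k w))\<bar> \<le> N * sqrt (gramdet k w)"
proof (cases "wedge k w = 0")
  case True
  then show ?thesis
    using form_zero[OF form] N(2) gramdet_nonneg[of k w] by (simp add: dirac_def zero_fun_def)
next
  case False
  define m where "m = mass k (wedge k w)"
  have "0 < m"
    using False mass_eq_0_iff[OF wedge_in_Lambda] mass_nonneg[OF wedge_in_Lambda]
    by (auto simp: m_def order_le_less)
  have "simple k ((1 / m) *\<^sub>R wedge k w)"
    unfolding simple_def by (intro exI[of _ "1 / m"] exI[of _ w]) (simp add: fun_eq_iff)
  moreover have "mass k ((1 / m) *\<^sub>R wedge k w) = 1"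
    using \<open>0 < m\<close> by (simp add: mass_scaleR[OF wedge_in_Lambda] m_def)
  ultimately have "\<bar>\<omega> (dirac p ((1 / m) *\<^sub>R wedge k w))\<bar> \<le> N"
    using form_normj_0_ge[of k _ \<omega> p] N(1) by (metis ereal_less_eq(3) order_trans)
  then have "\<bar>\<omega> (dirac p (wedge k w))\<bar> \<le> N * m"
    using \<open>0 < m\<close> form_scaleR[OF form dirac_in_chains[OF wedge_in_Lambda]]
    by (simp add: dirac_scaleR abs_mult field_simps)
  also have "\<dots> \<le> N * sqrt (gramdet k w)"
    using mass_wedge_le[of k w] N(2) by (simp add: m_def mult_left_mono)
  finally show ?thesis .
qed

lemma abs_form_dirac_le:
  assumes form: "is_form k \<omega>" and N: "form_normj k \<omega> 0 \<le> ereal N" "0 \<le> N"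
    and \<alpha>: "\<alpha> \<in> Lambda k"
  shows "\<bar>\<omega> (dirac p \<alpha>)\<bar> \<le> N * mass k \<alpha>"
proof (rule mult_mass_greatest[OF \<alpha> N(2)])
  fix n c ws assume "\<alpha> = wedge_comb k n c ws"
  then have "\<omega> (dirac p \<alpha>) = \<omega> (\<Sum>i<n. c i *\<^sub>R dirac p (wedge k (ws i)))"
    by (simp add: wedge_comb_eq_sum dirac_sum dirac_scaleR)
  also have "\<dots> = (\<Sum>i<n. \<omega> (c i *\<^sub>R dirac p (wedge k (ws i))))"
    by (rule form_sum[OF form])
      (simp_all add: subspace_scale[OF subspace_chains dirac_in_chains[OF wedge_in_Lambda]])
  also have "\<dots> = (\<Sum>i<n. c i * \<omega> (dirac p (wedge k (ws i))))"
    by (simp add: form_scaleR[OF form dirac_in_chains[OF wedge_in_Lambda]])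
  finally have "\<bar>\<omega> (dirac p \<alpha>)\<bar> \<le> (\<Sum>i<n. \<bar>c i\<bar> * \<bar>\<omega> (dirac p (wedge k (ws i)))\<bar>)"
    by (simp add: abs_mult order_trans[OF sum_abs])
  also have "\<dots> \<le> (\<Sum>i<n. \<bar>c i\<bar> * (N * sqrt (gramdet k (ws i))))"
    by (intro sum_mono mult_left_mono abs_form_dirac_wedge_le[OF form N]) simp
  finally show "\<bar>\<omega> (dirac p \<alpha>)\<bar> \<le> N * comb_mass k n c ws"
    by (simp add: sum_distrib_left algebra_simps)
qed

lemma abs_form_diffop_dirac_le:
  assumes form: "is_form k \<omega>" and N: "form_normj k \<omega> 1 \<le> ereal N" "0 \<le> N"
    and \<alpha>: "\<alpha> \<in> Lambda k"
  shows "\<bar>\<omega> (diffop u (dirac p \<alpha>))\<bar> \<le> N * (norm u * mass k \<alpha>)"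
proof (cases "u = 0 \<or> \<alpha> = 0")
  case True
  then have "diffop u (dirac p \<alpha>) = 0"
    by (auto simp: diffop_def transl_def dirac_def fun_eq_iff)
  then show ?thesis
    using form_zero[OF form] N(2) mass_nonneg[OF \<alpha>] by simp
next
  case False
  define s where "s = 1 / (norm u * mass k \<alpha>)"
  have "0 < mass k \<alpha>"
    using False mass_eq_0_iff[OF \<alpha>] mass_nonneg[OF \<alpha>] by (auto simp: order_le_less)
  then have "0 < s"
    using False by (simp add: s_def)
  have "norm u * mass k (s *\<^sub>R \<alpha>) = 1"
    using \<open>0 < s\<close> \<open>0 < mass k \<alpha>\<close> False by (simp add: mass_scaleR[OF \<alpha>] s_def)
  then have "\<bar>\<omega> (diffop u (dirac p (s *\<^sub>R \<alpha>)))\<bar> \<le> N"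
    using form_normj_1_ge[OF subspace_scale[OF subspace_Lambda \<alpha>], where u = u and \<omega> = \<omega> and p = p]
      N(1)
    by (metis ereal_less_eq(3) order_trans)
  then have "s * \<bar>\<omega> (diffop u (dirac p \<alpha>))\<bar> \<le> N"
    using \<open>0 < s\<close> form_scaleR[OF form diffop_in_chains[OF dirac_in_chains[OF \<alpha>]]]
    by (simp add: dirac_scaleR diffop_scaleR abs_mult)
  then show ?thesis
    using \<open>0 < s\<close> \<open>0 < mass k \<alpha>\<close> False by (simp add: s_def field_simps)
qed

lemma form_le_natnorm_1_times_mass:
  assumes form: "is_form k \<omega>" and N: "form_natnorm k 1 \<omega> \<le> ereal N" "0 \<le> N"
    and P: "P \<in> chains k" and supp: "supp P \<subseteq> cball p \<epsilon>"
  shows "\<omega> P \<le> N * (mass k (vec0 P) + \<epsilon> * chain_mass k P)"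
proof -
  have fin: "finite (supp P)" and P_q: "\<And>q. P q \<in> Lambda k"
    using P by (auto simp: chains_def)
  have N0: "form_normj k \<omega> 0 \<le> ereal N" and N1: "form_normj k \<omega> 1 \<le> ereal N"
    using form_normj_le_natnorm[of _ 1 k \<omega>] N(1) by (auto intro: order_trans)
  have diffop_chains: "diffop (q - p) (dirac p (P q)) \<in> chains k" for q
    by (intro diffop_in_chains dirac_in_chains P_q)
  have "\<omega> P = \<omega> (dirac p (vec0 P) + (\<Sum>q\<in>supp P. diffop (q - p) (dirac p (P q))))"
    using arg_cong[OF chain_eq_dirac_vec0_plus_diffops[OF fin, of p], of \<omega>] .
  also have "\<dots> = \<omega> (dirac p (vec0 P)) + \<omega> (\<Sum>q\<in>supp P. diffop (q - p) (dirac p (P q)))"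
    by (intro form_add[OF form] dirac_in_chains vec0_in_Lambda[OF P]
        subspace_sum[OF subspace_chains] diffop_chains)
  also have "\<dots> = \<omega> (dirac p (vec0 P)) + (\<Sum>q\<in>supp P. \<omega> (diffop (q - p) (dirac p (P q))))"
    by (simp add: form_sum[OF form fin diffop_chains])
  also have "\<dots> \<le> N * mass k (vec0 P) + (\<Sum>q\<in>supp P. N * (\<epsilon> * mass k (P q)))"
  proof (intro add_mono sum_mono)
    show "\<omega> (dirac p (vec0 P)) \<le> N * mass k (vec0 P)"
      using abs_form_dirac_le[OF form N0 N(2) vec0_in_Lambda[OF P], of p] by simp
  next
    fix q assume "q \<in> supp P"
    then have "norm (q - p) \<le> \<epsilon>"
      using supp by (auto simp: dist_norm norm_minus_commute)
    then have "N * (norm (q - p) * mass k (P q)) \<le> N * (\<epsilon> * mass k (P q))"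
      using N(2) mass_nonneg[OF P_q] by (intro mult_left_mono mult_right_mono) auto
    then show "\<omega> (diffop (q - p) (dirac p (P q))) \<le> N * (\<epsilon> * mass k (P q))"
      using abs_form_diffop_dirac_le[OF form N1 N(2) P_q[of q], of "q - p" p] by simp
  qed
  also have "\<dots> = N * (mass k (vec0 P) + \<epsilon> * chain_mass k P)"
    by (simp add: chain_mass_def sum_distrib_left algebra_simps)
  finally show ?thesis .
qed

lemma form_natnorm_vec0_le_1:
  assumes "linear \<phi>" "\<forall>\<beta>\<in>Lambda k. \<bar>\<phi> \<beta>\<bar> \<le> mass k \<beta>"
  shows "form_natnorm k r (\<lambda>P. \<phi> (vec0 P)) \<le> 1"
  unfolding form_natnorm_def
proof (subst Max_le_iff; clarsimp)
  fix j
  show "form_normj k (\<lambda>P. \<phi> (vec0 P)) j \<le> 1"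
  proof (cases "j = 0")
    case True
    have "\<bar>\<phi> \<alpha>\<bar> \<le> 1" if "simple k \<alpha>" "mass k \<alpha> = 1" for \<alpha>
      using assms(2) simple_in_Lambda[OF that(1)] that(2) by fastforce
    then show ?thesis
      using True unfolding form_normj_def by (auto simp: vec0_dirac intro!: SUP_least)
  next
    case False
    have "\<bar>\<phi> (vec0 (diffops U (dirac p \<alpha>)))\<bar> \<le> 1" if "length U = j" "\<alpha> \<in> Lambda k" for U p \<alpha>
      using that False vec0_diffops[OF dirac_in_chains[OF that(2)], of U p] linear_0[OF assms(1)]
      by auto
    then show ?thesis
      using False unfolding form_normj_def by (auto intro!: SUP_least)
  qed
qed

lemma chain_natnorm_nonneg: "0 \<le> chain_natnorm k r P"
  by (simp add: chain_natnorm_def)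

lemma chain_natnorm_le:
  fixes P :: "'a::euclidean_space chain"
  assumes "0 \<le> R"
    and "\<And>\<omega> :: 'a chain \<Rightarrow> real. \<omega> \<in> Bforms k r \<Longrightarrow> \<omega> P \<le> real_of_ereal (form_natnorm k r \<omega>) * R"
  shows "chain_natnorm k r P \<le> ereal R"
  unfolding chain_natnorm_def
proof (intro sup_least SUP_least)
  fix \<omega> :: "'a chain \<Rightarrow> real" assume "\<omega> \<in> {\<omega> \<in> Bforms k r. \<exists>Q\<in>chains k. \<omega> Q \<noteq> 0}"
  then have "\<omega> P \<le> real_of_ereal (form_natnorm k r \<omega>) * R"
    using assms(2) by blast
  then show "ereal (\<omega> P / real_of_ereal (form_natnorm k r \<omega>)) \<le> ereal R"
    using assms(1) real_of_form_natnorm_nonneg[of k r \<omega>]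
    by (cases "real_of_ereal (form_natnorm k r \<omega>) = 0") (simp_all add: divide_le_eq mult.commute)
qed (simp add: assms(1))

lemma chain_natnorm_ge:
  assumes "\<omega> \<in> Bforms k r" "Q \<in> chains k" "\<omega> Q \<noteq> 0"
  shows "ereal (\<omega> P / real_of_ereal (form_natnorm k r \<omega>)) \<le> chain_natnorm k r P"
  unfolding chain_natnorm_def using assms by (intro le_supI2 SUP_upper) auto

lemma mass_vec0_le_chain_natnorm:
  assumes P: "P \<in> chains k"
  shows "ereal (mass k (vec0 P)) \<le> chain_natnorm k r P"
proof (cases "mass k (vec0 P) = 0")
  case True
  then show ?thesis using chain_natnorm_nonneg[of k r P] by (simp add: zero_ereal_def)
next
  case False
  then have pos: "0 < mass k (vec0 P)"
    using mass_nonneg[OF vec0_in_Lambda[OF P]] by simp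
  obtain \<phi> where \<phi>: "linear \<phi>" "\<phi> (vec0 P) = mass k (vec0 P)" "\<forall>\<beta>\<in>Lambda k. \<bar>\<phi> \<beta>\<bar> \<le> mass k \<beta>"
    using exists_norming_functional_mass[OF vec0_in_Lambda[OF P]] by blast
  define \<omega> where "\<omega> = (\<lambda>Q. \<phi> (vec0 Q))"
  define N where "N = real_of_ereal (form_natnorm k r \<omega>)"
  have form: "is_form k \<omega>"
    unfolding \<omega>_def by (rule is_form_linear_vec0[OF \<phi>(1)])
  have le_1: "form_natnorm k r \<omega> \<le> 1"
    unfolding \<omega>_def by (rule form_natnorm_vec0_le_1[OF \<phi>(1,3)])
  then have "form_natnorm k r \<omega> \<le> ereal N"
    unfolding N_def by (intro form_natnorm_le_real_of) auto
  then have "form_normj k \<omega> 0 \<le> ereal N"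
    using form_normj_le_natnorm[of 0 r k \<omega>] by simp
  moreover have "0 \<le> N"
    unfolding N_def by (rule real_of_form_natnorm_nonneg)
  ultimately have "\<bar>\<omega> (dirac 0 (vec0 P))\<bar> \<le> N * mass k (vec0 P)"
    by (rule abs_form_dirac_le[OF form _ _ vec0_in_Lambda[OF P]])
  then have "1 \<le> N"
    using pos \<phi>(2) by (simp add: \<omega>_def vec0_dirac)
  moreover have "N \<le> 1"
    using le_1 \<open>1 \<le> N\<close> unfolding N_def by (cases "form_natnorm k r \<omega>") auto
  moreover have "\<omega> \<in> Bforms k r"
    using form le_1 by (auto simp: Bforms_def)
  ultimately show ?thesis
    using chain_natnorm_ge[of \<omega> k r P P] P pos \<phi>(2) by (simp add: \<omega>_def N_def)
qed

lemma chain_natnorm_1_le_cball: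
  fixes P :: "'a::euclidean_space chain"
  assumes P: "P \<in> chains k" and "0 \<le> \<epsilon>" and supp: "supp P \<subseteq> cball p \<epsilon>"
  shows "chain_natnorm k 1 P \<le> ereal (mass k (vec0 P) + \<epsilon> * chain_mass k P)"
proof (rule chain_natnorm_le)
  have "0 \<le> chain_mass k P"
    using P by (auto simp: chain_mass_def chains_def intro: sum_nonneg mass_nonneg)
  then show "0 \<le> mass k (vec0 P) + \<epsilon> * chain_mass k P"
    using mass_nonneg[OF vec0_in_Lambda[OF P]] \<open>0 \<le> \<epsilon>\<close> by simp
next
  fix \<omega> :: "'a chain \<Rightarrow> real" assume "\<omega> \<in> Bforms k 1"
  then have "is_form k \<omega>" "form_natnorm k 1 \<omega> \<noteq> \<infinity>"
    by (auto simp: Bforms_def)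
  then show "\<omega> P \<le> real_of_ereal (form_natnorm k 1 \<omega>) * (mass k (vec0 P) + \<epsilon> * chain_mass k P)"
    using form_le_natnorm_1_times_mass[OF _ form_natnorm_le_real_of real_of_form_natnorm_nonneg P supp]
    by simp
qed

theorem mainTheorem16:
  fixes P :: "('a::euclidean_space) chain" and k r :: nat
  assumes "P \<in> chains k" and "r \<ge> 1"
  shows "ereal (mass k (vec0 P)) \<le> chain_natnorm k r P \<and>
         (\<forall>(p::'a) (\<epsilon>::real). \<epsilon> > 0 \<and> supp P \<subseteq> ball p \<epsilon> \<longrightarrow>
           chain_natnorm k 1 P \<le> ereal (mass k (vec0 P) + \<epsilon> * chain_mass k P))"
  using mass_vec0_le_chain_natnorm[OF assms(1)] chain_natnorm_1_le_cball[OF assms(1)]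
    ball_subset_cball
  by (meson less_imp_le order_trans)

end
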